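(* Let $\mathcal C$ be an SCW code with $M\ge2$ codewords of length $K$ over the symbol set $\mathcal S$, used with equiprobable codewords over the Poisson channel with fixed CSI $(\bar c_{\mathrm s},\bar c_{\mathrm n})\in(0,\infty)^2$, and let $P_e^{\mathrm{code}}$ be the codeword error rate of the optimal (coherent ML) detector. Then for every $t>0$, $$P_e^{\mathrm{code}}\le\frac1M\sum_{\mathbf s\in\mathcal C}\ \sum_{\hat{\mathbf s}\in\mathcal C,\,\hat{\mathbf s}\ne\mathbf s}\exp\!\left(\sum_{k=1}^K\lambda[k]\left(e^{\varpi[k]t}-1\right)\right),$$ where $\lambda[k]=s[k]\bar c_{\mathrm s}+\bar c_{\mathrm n}$ and $\varpi[k]=\ln\!\left(\frac{1+\hat s[k]\,\mathsf{SNR}}{1+s[k]\,\mathsf{SNR}}\right)$ with $\mathsf{SNR}=\bar c_{\mathrm s}/\bar c_{\mathrm n}$.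
   Context: Symbol set $\mathcal S=\{\eta_0,\dots,\eta_{L-1}\}$ with $0=\eta_0<\dots<\eta_{L-1}=1$. An SCW code with weight vector $\bar{\boldsymbol\omega}$ is a codebook $\mathcal C\subseteq\mathcal S^K$ ($K=\sum_\ell\bar\omega_\ell$) in which every codeword has exactly $\bar\omega_\ell$ entries equal to $\eta_\ell$ for each $\ell$. Channel: given transmitted codeword $\mathbf s$, the observations $r[1],\dots,r[K]$ are independent with $r[k]$ Poisson of mean $s[k]\bar c_{\mathrm s}+\bar c_{\mathrm n}$. The optimal detector outputs a codeword maximizing the likelihood $\prod_{k}\frac{(\bar c_{\mathrm s}s[k]+\bar c_{\mathrm n})^{r[k]}e^{-\bar c_{\mathrm s}s[k]-\bar c_{\mathrm n}}}{r[k]!}$ over $\mathcal C$, ties broken uniformly at random among maximizers. The transmitted codeword is uniform on $\mathcal C$, and $P_e^{\mathrm{code}}$ is the probability that the detected codeword differs from the transmitted one. *)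

theory Defs
  imports "HOL-Probability.Probability"
begin

definition symbol_set :: "nat \<Rightarrow> (nat \<Rightarrow> real) \<Rightarrow> bool" where
  "symbol_set L \<eta> \<longleftrightarrow> L \<ge> 1 \<and> strict_mono_on {0..<L} \<eta> \<and> \<eta> 0 = 0 \<and> \<eta> (L - 1) = 1"

definition code_length :: "nat \<Rightarrow> (nat \<Rightarrow> nat) \<Rightarrow> nat" where
  "code_length L \<omega> = (\<Sum>l<L. \<omega> l)"

definition scw_code :: "nat \<Rightarrow> (nat \<Rightarrow> real) \<Rightarrow> (nat \<Rightarrow> nat) \<Rightarrow> (nat \<Rightarrow> real) set \<Rightarrow> bool" where
  "scw_code L \<eta> \<omega> C \<longleftrightarrow>
     C \<subseteq> PiE {0..<code_length L \<omega>} (\<lambda>_. \<eta> ` {0..<L}) \<and>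
     (\<forall>s\<in>C. \<forall>l<L. card {k\<in>{0..<code_length L \<omega>}. s k = \<eta> l} = \<omega> l)"

definition likelihood :: "real \<Rightarrow> real \<Rightarrow> nat \<Rightarrow> (nat \<Rightarrow> real) \<Rightarrow> (nat \<Rightarrow> nat) \<Rightarrow> real" where
  "likelihood cs cn K s r =
     (\<Prod>k<K. (cs * s k + cn) ^ r k * exp (- cs * s k - cn) / fact (r k))"

definition ml_set :: "real \<Rightarrow> real \<Rightarrow> nat \<Rightarrow> (nat \<Rightarrow> real) set \<Rightarrow> (nat \<Rightarrow> nat) \<Rightarrow> (nat \<Rightarrow> real) set" where
  "ml_set cs cn K C r = {c\<in>C. \<forall>c'\<in>C. likelihood cs cn K c' r \<le> likelihood cs cn K c r}"

text \<open>Probability that the detector (uniform tie breaking) outputs s, given r.\<close>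
definition detect_prob :: "real \<Rightarrow> real \<Rightarrow> nat \<Rightarrow> (nat \<Rightarrow> real) set \<Rightarrow> (nat \<Rightarrow> real) \<Rightarrow> (nat \<Rightarrow> nat) \<Rightarrow> real" where
  "detect_prob cs cn K C s r =
     (if s \<in> ml_set cs cn K C r then 1 / real (card (ml_set cs cn K C r)) else 0)"

definition channel :: "real \<Rightarrow> real \<Rightarrow> nat \<Rightarrow> (nat \<Rightarrow> real) \<Rightarrow> (nat \<Rightarrow> nat) pmf" where
  "channel cs cn K s = Pi_pmf {0..<K} 0 (\<lambda>k. poisson_pmf (s k * cs + cn))"

definition Pe_code :: "real \<Rightarrow> real \<Rightarrow> nat \<Rightarrow> (nat \<Rightarrow> real) set \<Rightarrow> real" where
  "Pe_code cs cn K C =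
     (1 / real (card C)) * (\<Sum>s\<in>C. 1 - measure_pmf.expectation (channel cs cn K s) (detect_prob cs cn K C s))"

end

theory Submission
  imports Defs
begin

text \<open>
  Union bound plus Chernoff bound. The detector can only err on \<open>s\<close> when some other codeword
  \<open>s'\<close> is at least as likely, so the conditional error is at most the sum of the pairwise
  probabilities \<open>P(\<Lambda>(s') \<ge> \<Lambda>(s))\<close>. In an SCW code all codewords have the same symbol sum,
  hence the same total Poisson rate, so the factors \<open>exp(-\<lambda>[k])\<close> cancel and the likelihood
  ratio is \<open>exp(\<Sum>k. r[k] \<varpi>[k])\<close>. Bounding the indicator of \<open>\<Sum>k. r[k] \<varpi>[k] \<ge> 0\<close> by
  \<open>exp(t \<Sum>k. r[k] \<varpi>[k])\<close> and using the independence of the \<open>r[k]\<close> together with the Poisson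
  generating function \<open>E[q^r] = exp(\<lambda>(q - 1))\<close> gives the exponent.
\<close>

lemma nn_integral_poisson_power:
  fixes a q :: real
  assumes a: "a > 0" and q: "q \<ge> 0"
  shows "(\<integral>\<^sup>+ x. ennreal (q ^ x) \<partial>measure_pmf (poisson_pmf a)) = ennreal (exp (a * (q - 1)))"
proof -
  have sums: "(\<lambda>n. (a * q) ^ n / fact n * exp (- a)) sums (exp (a * q) * exp (- a))"
    using exp_converges[of "a * q"] by (intro sums_mult2) (simp add: divide_inverse mult.commute)
  have "(\<integral>\<^sup>+ x. ennreal (q ^ x) \<partial>measure_pmf (poisson_pmf a))
      = (\<integral>\<^sup>+ x. ennreal ((a * q) ^ x / fact x * exp (- a)) \<partial>count_space UNIV)"
    unfolding nn_integral_measure_pmf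
    by (intro nn_integral_cong) (use a q in \<open>simp add: ennreal_mult'[symmetric] power_mult_distrib\<close>)
  also have "\<dots> = (\<Sum>x. ennreal ((a * q) ^ x / fact x * exp (- a)))"
    by (rule nn_integral_count_space_nat)
  also have "\<dots> = ennreal (\<Sum>x. (a * q) ^ x / fact x * exp (- a))"
    by (rule suminf_ennreal2) (use a q sums in \<open>auto simp: sums_iff\<close>)
  also have "(\<Sum>x. (a * q) ^ x / fact x * exp (- a)) = exp (a * (q - 1))"
    using sums_unique[OF sums] by (simp add: mult_exp_exp algebra_simps)
  finally show ?thesis .
qed

lemma likelihood_pos:
  assumes "\<And>k. k < K \<Longrightarrow> s k * cs + cn > 0"
  shows "likelihood cs cn K s r > 0"
  unfolding likelihood_def by (intro prod_pos) (use assms in \<open>auto simp: mult.commute\<close>)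

lemma likelihood_ratio_equal_total_rate:
  assumes pos: "\<And>k. k < K \<Longrightarrow> s k * cs + cn > 0"
    and pos': "\<And>k. k < K \<Longrightarrow> s' k * cs + cn > 0"
    and sum_eq: "(\<Sum>k<K. s k) = (\<Sum>k<K. s' k)"
  shows "likelihood cs cn K s' r =
    likelihood cs cn K s r * exp (\<Sum>k<K. real (r k) * ln ((s' k * cs + cn) / (s k * cs + cn)))"
proof -
  define a where "a k = s k * cs + cn" for k
  define b where "b k = s' k * cs + cn" for k
  have factor: "(cs * s' k + cn) ^ r k * exp (- cs * s' k - cn) / fact (r k) =
      (cs * s k + cn) ^ r k * exp (- cs * s k - cn) / fact (r k)
        * exp (real (r k) * ln (b k / a k)) * exp (a k - b k)" if "k < K" for k
  proof -
    have "exp (real (r k) * ln (b k / a k)) = (b k / a k) ^ r k"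
      using pos[OF that] pos'[OF that] by (simp add: exp_of_nat_mult a_def b_def)
    moreover have "exp (- cs * s k - cn) * exp (a k - b k) = exp (- cs * s' k - cn)"
      unfolding a_def b_def by (simp add: mult_exp_exp algebra_simps)
    moreover have "(cs * s k + cn) ^ r k * (b k / a k) ^ r k = (cs * s' k + cn) ^ r k"
      using pos[OF that] unfolding a_def b_def by (simp add: power_divide mult.commute)
    ultimately show ?thesis by (simp add: field_simps)
  qed
  have "likelihood cs cn K s' r = (\<Prod>k<K. (cs * s k + cn) ^ r k * exp (- cs * s k - cn) / fact (r k)
        * exp (real (r k) * ln (b k / a k)) * exp (a k - b k))"
    unfolding likelihood_def by (intro prod.cong refl factor) simp
  also have "\<dots> = likelihood cs cn K s r * exp (\<Sum>k<K. real (r k) * ln (b k / a k))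
      * exp (\<Sum>k<K. a k - b k)"
    by (simp only: likelihood_def prod.distrib exp_sum finite_lessThan)
  also have "(\<Sum>k<K. a k - b k) = 0"
    unfolding a_def b_def sum_subtractf sum.distrib sum_distrib_right[symmetric] using sum_eq by simp
  finally show ?thesis by (simp add: a_def b_def)
qed

lemma pairwise_error_chernoff:
  fixes t :: real
  assumes pos: "\<And>k. k < K \<Longrightarrow> s k * cs + cn > 0"
    and pos': "\<And>k. k < K \<Longrightarrow> s' k * cs + cn > 0"
    and sum_eq: "(\<Sum>k<K. s k) = (\<Sum>k<K. s' k)"
    and t: "t \<ge> 0"
  shows "measure_pmf.prob (channel cs cn K s) {r. likelihood cs cn K s r \<le> likelihood cs cn K s' r}
    \<le> exp (\<Sum>k<K. (s k * cs + cn) * (exp (ln ((s' k * cs + cn) / (s k * cs + cn)) * t) - 1))"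
proof -
  define w where "w k = ln ((s' k * cs + cn) / (s k * cs + cn))" for k
  define A where "A = {r. likelihood cs cn K s r \<le> likelihood cs cn K s' r}"
  define g where "g r = (\<Prod>k\<in>{0..<K}. exp (w k * t) ^ r k)" for r :: "nat \<Rightarrow> nat"
  have indicator_le: "indicator A r \<le> ennreal (g r)" for r
  proof (cases "r \<in> A")
    case True
    then have "likelihood cs cn K s r \<le> likelihood cs cn K s r * exp (\<Sum>k<K. real (r k) * w k)"
      using likelihood_ratio_equal_total_rate[OF pos pos' sum_eq, where r=r] unfolding A_def w_def by simp
    then have "0 \<le> t * (\<Sum>k<K. real (r k) * w k)"
      using likelihood_pos[OF pos, where r=r] t by simp
    then have "1 \<le> exp (t * (\<Sum>k<K. real (r k) * w k))" by simp
    also have "exp (t * (\<Sum>k<K. real (r k) * w k)) = g r"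
      unfolding g_def sum_distrib_left lessThan_atLeast0
      by (simp add: exp_sum, intro prod.cong refl) (simp add: exp_of_nat_mult[symmetric] algebra_simps)
    finally show ?thesis using True by simp
  qed (simp add: g_def)
  have "emeasure (measure_pmf (channel cs cn K s)) A
      \<le> (\<integral>\<^sup>+ r. ennreal (g r) \<partial>measure_pmf (channel cs cn K s))"
    by (simp flip: nn_integral_indicator) (intro nn_integral_mono indicator_le)
  also have "\<dots> = (\<integral>\<^sup>+ r. (\<Prod>k\<in>{0..<K}. ennreal (exp (w k * t) ^ r k)) \<partial>measure_pmf (channel cs cn K s))"
    unfolding g_def by (intro nn_integral_cong prod_ennreal[symmetric]) auto
  also have "\<dots> = (\<Prod>k\<in>{0..<K}.
      \<integral>\<^sup>+ x. ennreal (exp (w k * t) ^ x) \<partial>measure_pmf (poisson_pmf (s k * cs + cn)))"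
    unfolding channel_def by (rule nn_integral_prod_Pi_pmf) simp
  also have "\<dots> = (\<Prod>k\<in>{0..<K}. ennreal (exp ((s k * cs + cn) * (exp (w k * t) - 1))))"
    by (intro prod.cong refl nn_integral_poisson_power) (use pos in auto)
  also have "\<dots> = ennreal (exp (\<Sum>k<K. (s k * cs + cn) * (exp (w k * t) - 1)))"
    by (simp add: prod_ennreal exp_sum lessThan_atLeast0)
  finally show ?thesis unfolding measure_pmf.emeasure_eq_measure A_def w_def by simp
qed

lemma norm_detect_prob_le_one:
  assumes "finite C"
  shows "norm (detect_prob cs cn K C s r) \<le> 1"
proof (cases "s \<in> ml_set cs cn K C r")
  case True
  moreover have "finite (ml_set cs cn K C r)"
    using assms unfolding ml_set_def by simp
  ultimately have "card (ml_set cs cn K C r) \<ge> 1"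
    by (metis One_nat_def Suc_leI card_gt_0_iff empty_iff)
  with True show ?thesis unfolding detect_prob_def by simp
qed (simp add: detect_prob_def)

lemma one_minus_detect_prob_le_indicator:
  assumes "s \<in> C"
  shows "1 - detect_prob cs cn K C s r \<le>
    indicator (\<Union>s'\<in>C - {s}. {r. likelihood cs cn K s r \<le> likelihood cs cn K s' r}) r"
proof (cases "r \<in> (\<Union>s'\<in>C - {s}. {r. likelihood cs cn K s r \<le> likelihood cs cn K s' r})")
  case True
  then show ?thesis by (simp add: detect_prob_def)
next
  case False
  then have "likelihood cs cn K c r < likelihood cs cn K s r" if "c \<in> C" "c \<noteq> s" for c
    using that by (simp add: not_le[symmetric])
  then have "ml_set cs cn K C r = {s}"
    unfolding ml_set_def using assms by (force simp: not_le[symmetric])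
  with False show ?thesis unfolding detect_prob_def by simp
qed

lemma detection_error_le_union_bound:
  assumes "finite C" and "s \<in> C"
  shows "1 - measure_pmf.expectation (channel cs cn K s) (detect_prob cs cn K C s)
    \<le> (\<Sum>s'\<in>C - {s}. measure_pmf.prob (channel cs cn K s)
          {r. likelihood cs cn K s r \<le> likelihood cs cn K s' r})"
proof -
  define M where "M = measure_pmf (channel cs cn K s)"
  define A where "A s' = {r. likelihood cs cn K s r \<le> likelihood cs cn K s' r}" for s'
  have integrable: "integrable M (detect_prob cs cn K C s)"
    unfolding M_def by (rule measure_pmf.integrable_const_bound[where B = 1])
      (use norm_detect_prob_le_one[OF assms(1)] in auto)
  have "1 - measure_pmf.expectation (channel cs cn K s) (detect_prob cs cn K C s)
      = integral\<^sup>L M (\<lambda>r. 1 - detect_prob cs cn K C s r)"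
    using integrable unfolding M_def by (simp add: measure_pmf.prob_space)
  also have "\<dots> \<le> integral\<^sup>L M (indicator (\<Union>s'\<in>C - {s}. A s'))"
    unfolding A_def using integrable
    by (intro integral_mono one_minus_detect_prob_le_indicator assms(2))
      (auto simp: M_def intro!: measure_pmf.integrable_const_bound[where B = 1])
  also have "\<dots> = measure M (\<Union>s'\<in>C - {s}. A s')"
    by (simp add: M_def)
  also have "\<dots> \<le> (\<Sum>s'\<in>C - {s}. measure M (A s'))"
    unfolding M_def by (rule measure_pmf.finite_measure_subadditive_finite) (use assms in auto)
  finally show ?thesis unfolding M_def A_def .
qed

lemma scw_codeword_sum:
  assumes scw: "scw_code L \<eta> \<omega> C" and inj: "inj_on \<eta> {0..<L}" and s: "s \<in> C"
  shows "(\<Sum>k<code_length L \<omega>. s k) = (\<Sum>l<L. \<eta> l * real (\<omega> l))"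
proof -
  define K where "K = code_length L \<omega>"
  have img: "s ` {0..<K} \<subseteq> \<eta> ` {0..<L}"
    using scw s unfolding scw_code_def K_def by (auto dest!: subsetD PiE_mem)
  have count: "card {k\<in>{0..<K}. s k = \<eta> l} = \<omega> l" if "l < L" for l
    using scw s that unfolding scw_code_def K_def by auto
  have "(\<Sum>k<K. s k) = (\<Sum>v\<in>\<eta> ` {0..<L}. \<Sum>k\<in>{k. k \<in> {0..<K} \<and> s k = v}. s k)"
    unfolding lessThan_atLeast0 by (rule sum.group[symmetric]) (use img in auto)
  also have "\<dots> = (\<Sum>v\<in>\<eta> ` {0..<L}. v * real (card {k\<in>{0..<K}. s k = v}))"
    by (simp add: mult.commute)
  also have "\<dots> = (\<Sum>l<L. \<eta> l * real (card {k\<in>{0..<K}. s k = \<eta> l}))"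
    unfolding lessThan_atLeast0 by (rule sum.reindex_cong[OF inj refl]) simp
  also have "\<dots> = (\<Sum>l<L. \<eta> l * real (\<omega> l))"
    using count by simp
  finally show ?thesis unfolding K_def .
qed

lemma symbol_set_nonneg:
  assumes "symbol_set L \<eta>" and "l < L"
  shows "\<eta> l \<ge> 0"
proof (cases "l = 0")
  case False
  with assms have "\<eta> 0 < \<eta> l"
    unfolding symbol_set_def by (intro strict_mono_onD[of "{0..<L}" \<eta>]) auto
  with assms(1) show ?thesis unfolding symbol_set_def by simp
qed (use assms in \<open>simp add: symbol_set_def\<close>)

lemma scw_codeword_nonneg:
  assumes "symbol_set L \<eta>" and "scw_code L \<eta> \<omega> C" and "s \<in> C" and "k < code_length L \<omega>"
  shows "s k \<ge> 0"
proof -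
  have "s k \<in> \<eta> ` {0..<L}"
    using assms(2-4) unfolding scw_code_def by (auto dest!: subsetD PiE_mem)
  with symbol_set_nonneg[OF assms(1)] show ?thesis by auto
qed

lemma snr_ratio_eq_rate_ratio:
  fixes cs cn x y :: real
  assumes "cn > 0"
  shows "(1 + x * (cs / cn)) / (1 + y * (cs / cn)) = (x * cs + cn) / (y * cs + cn)"
proof -
  have "1 + x * (cs / cn) = (x * cs + cn) / cn" "1 + y * (cs / cn) = (y * cs + cn) / cn"
    using assms by (simp_all add: field_simps)
  with assms show ?thesis by simp
qed

theorem proposition2:
  fixes L :: nat and \<eta> :: "nat \<Rightarrow> real" and \<omega> :: "nat \<Rightarrow> nat"
    and C :: "(nat \<Rightarrow> real) set" and cs cn t :: real
  assumes "symbol_set L \<eta>"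
    and "scw_code L \<eta> \<omega> C"
    and "card C \<ge> 2"
    and "cs > 0" and "cn > 0"
    and "t > 0"
  shows "Pe_code cs cn (code_length L \<omega>) C \<le>
    (1 / real (card C)) * (\<Sum>s\<in>C. \<Sum>s'\<in>C - {s}.
       exp (\<Sum>k<code_length L \<omega>.
              (s k * cs + cn) *
              (exp (ln ((1 + s' k * (cs / cn)) / (1 + s k * (cs / cn))) * t) - 1)))"
proof -
  define K where "K = code_length L \<omega>"
  have finite: "finite C"
    using assms(3) card.infinite by force
  have inj: "inj_on \<eta> {0..<L}"
    using assms(1) unfolding symbol_set_def by (auto intro: strict_mono_on_imp_inj_on)
  have rate_pos: "s k * cs + cn > 0" if "s \<in> C" "k < K" for s k
    using scw_codeword_nonneg[OF assms(1,2) that[unfolded K_def]] assms(4,5)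
    by (simp add: add_nonneg_pos)
  have pairwise: "measure_pmf.prob (channel cs cn K s) {r. likelihood cs cn K s r \<le> likelihood cs cn K s' r}
      \<le> exp (\<Sum>k<K. (s k * cs + cn) *
              (exp (ln ((1 + s' k * (cs / cn)) / (1 + s k * (cs / cn))) * t) - 1))"
    if "s \<in> C" "s' \<in> C" for s s'
    using pairwise_error_chernoff[of K s cs cn s' t] rate_pos that assms(6)
      scw_codeword_sum[OF assms(2) inj] snr_ratio_eq_rate_ratio[OF assms(5)]
    by (simp add: K_def)
  have "1 - measure_pmf.expectation (channel cs cn K s) (detect_prob cs cn K C s)
      \<le> (\<Sum>s'\<in>C - {s}. exp (\<Sum>k<K. (s k * cs + cn) *
              (exp (ln ((1 + s' k * (cs / cn)) / (1 + s k * (cs / cn))) * t) - 1)))"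
    if "s \<in> C" for s
    using that
    by (intro order_trans[OF detection_error_le_union_bound[OF finite that]] sum_mono pairwise) auto
  then show ?thesis
    unfolding Pe_code_def K_def[symmetric] by (intro mult_left_mono sum_mono) auto
qed

end
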